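(* Let $\mathcal P$ be a CPOS $2n$-gon and $i$ an index. Suppose the line through $P_i$ and $N(i+\tfrac12)$ meets the line $P_{n+i}P_{n+i+1}$ at a point $P_i'$ belonging to the segment $[P_{n+i},P_{n+i+1}]$. Then $N(i+\tfrac12)$ is the midpoint of the chord $P_iP_i'$, and this chord divides the region bounded by $\mathcal P$ into two regions of equal area.
   Context: A CPOS $2n$-gon ($n\ge2$) is a closed planar polygon $\mathcal P$ with vertices $P_1,\dots,P_{2n}$ (indices mod $2n$) bounding a convex region, with no two adjacent sides parallel, with $P_{i+n+1}-P_{i+n}$ parallel to $P_{i+1}-P_i$ for all $i$, and positively oriented: $[P_{i+1}-P_i,P_{j+1}-P_j]>0$ for $1\le i<j\le n$ ($[\cdot,\cdot]$ = determinant). $M_i=\tfrac12(P_i+P_{i+n})$; the mid-parallel line $m(i+\tfrac12)$ is the line through $M_i$ parallel to $P_{i+1}-P_i$. $A_i^+$ is the area of the polygon $P_iP_{i+1}\cdots P_{i+n}$ and $A_i^-$ the area of the polygon $P_{i+n}P_{i+n+1}\cdots P_{i+2n}$. $N(i+\tfrac12)$ is the unique point of $m(i+\tfrac12)$ with $[N(i+\tfrac12)-M_i,\,P_{i+n}-P_i]=\tfrac12(A_i^+-A_i^-)$. *)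

theory Defs
  imports "HOL-Analysis.Analysis"
begin

type_synonym pt = "real \<times> real"

definition det2 :: "pt \<Rightarrow> pt \<Rightarrow> real" where
  "det2 u v = fst u * snd v - snd u * fst v"

text \<open>Side vector P(k+1) - P(k) of a polygon with vertex function P (indices taken in nat,
  the vertex function being 2n-periodic).\<close>
definition side :: "(nat \<Rightarrow> pt) \<Rightarrow> nat \<Rightarrow> pt" where
  "side P k = P (Suc k) - P k"

text \<open>CPOS 2n-gon: periodic vertex function, convex (every vertex weakly to the left of every
  directed side line), no two adjacent sides parallel, opposite sides parallel,
  positively oriented.\<close>
definition cpos :: "(nat \<Rightarrow> pt) \<Rightarrow> nat \<Rightarrow> bool" where
  "cpos P n \<longleftrightarrow>
     n \<ge> 2 \<and>
     (\<forall>k. P (k + 2 * n) = P k) \<and>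
     (\<forall>k j. det2 (side P k) (P j - P k) \<ge> 0) \<and>
     (\<forall>k. det2 (side P k) (side P (Suc k)) \<noteq> 0) \<and>
     (\<forall>k. det2 (side P (k + n)) (side P k) = 0) \<and>
     (\<forall>i j. 1 \<le> i \<and> i < j \<and> j \<le> n \<longrightarrow> det2 (side P i) (side P j) > 0)"

definition poly_area :: "pt list \<Rightarrow> real" where
  "poly_area vs = \<bar>\<Sum>k<length vs. det2 (vs ! k) (vs ! ((k + 1) mod length vs))\<bar> / 2"

definition A_plus :: "(nat \<Rightarrow> pt) \<Rightarrow> nat \<Rightarrow> nat \<Rightarrow> real" where
  "A_plus P n i = poly_area (map (\<lambda>k. P (i + k)) [0..<n + 1])"

definition A_minus :: "(nat \<Rightarrow> pt) \<Rightarrow> nat \<Rightarrow> nat \<Rightarrow> real" where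
  "A_minus P n i = poly_area (map (\<lambda>k. P (i + n + k)) [0..<n + 1])"

definition Mpt :: "(nat \<Rightarrow> pt) \<Rightarrow> nat \<Rightarrow> nat \<Rightarrow> pt" where
  "Mpt P n i = midpoint (P i) (P (i + n))"

definition midline :: "(nat \<Rightarrow> pt) \<Rightarrow> nat \<Rightarrow> nat \<Rightarrow> pt set" where
  "midline P n i = {Mpt P n i + t *\<^sub>R side P i | t. True}"

definition Npt :: "(nat \<Rightarrow> pt) \<Rightarrow> nat \<Rightarrow> nat \<Rightarrow> pt" where
  "Npt P n i = (THE X. X \<in> midline P n i \<and>
      det2 (X - Mpt P n i) (P (i + n) - P i) = (A_plus P n i - A_minus P n i) / 2)"

end

theory Submission
  imports Defs
begin

text \<open>Opposite sides of a CPOS polygon are antiparallel, so the segment \<open>[P (i+n), P (i+n+1)]\<close>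
  lies on the line through \<open>P (i+n)\<close> parallel to the mid-parallel line. The defining
  equation of \<open>N(i+1/2)\<close> therefore pins down the point on the ray from \<open>P i\<close> through it which
  meets that line: it is \<open>P i + 2 (N - P i)\<close>, so \<open>N\<close> is the midpoint of the chord \<open>P i Q\<close>.
  The same computation shows that the triangle \<open>P i, P (i+n), Q\<close> has signed double area
  \<open>A\<^sup>- - A\<^sup>+\<close>; moving that triangle from one half of the polygon to the other gives both
  sides of the chord the area \<open>(A\<^sup>+ + A\<^sup>-) / 2\<close>.\<close>

lemma det2_scaleR_left [simp]: "det2 (c *\<^sub>R u) v = c * det2 u v"
  by (simp add: det2_def algebra_simps)

lemma det2_scaleR_right [simp]: "det2 u (c *\<^sub>R v) = c * det2 u v"
  by (simp add: det2_def algebra_simps)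

lemma det2_add_right: "det2 u (v + w) = det2 u v + det2 u w"
  by (simp add: det2_def algebra_simps)

lemma det2_diff_right: "det2 u (v - w) = det2 u v - det2 u w"
  by (simp add: det2_def algebra_simps)

lemma det2_self [simp]: "det2 u u = 0"
  by (simp add: det2_def)

lemma det2_zero_left [simp]: "det2 0 u = 0"
  by (simp add: det2_def)

lemma det2_commute: "det2 v u = - det2 u v"
  by (simp add: det2_def)

lemma det2_eq_0_imp_scaleR:
  assumes "det2 v u = 0" and "u \<noteq> 0"
  shows "\<exists>c. v = c *\<^sub>R u"
proof -
  obtain a b where u: "u = (a, b)" by force
  obtain c e where v: "v = (c, e)" by force
  have h: "c * b = e * a" using assms(1) by (simp add: u v det2_def)
  show ?thesis
  proof (cases "a = 0")
    case True
    then have "b \<noteq> 0" using assms(2) u by (auto simp: zero_prod_def)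
    then have "v = (e / b) *\<^sub>R u" using h True by (simp add: u v)
    then show ?thesis by blast
  next
    case False
    then have "v = (c / a) *\<^sub>R u" using h by (simp add: u v field_simps)
    then show ?thesis by blast
  qed
qed

lemma cpos_det2_side_Suc_pos:
  assumes "cpos P n"
  shows "det2 (side P k) (side P (Suc k)) > 0"
proof -
  have "P (k + 2) - P k = side P k + side P (Suc k)" by (simp add: side_def)
  moreover have "det2 (side P k) (P (k + 2) - P k) \<ge> 0" using assms unfolding cpos_def by blast
  ultimately have "det2 (side P k) (side P (Suc k)) \<ge> 0" by (simp add: det2_add_right)
  moreover have "det2 (side P k) (side P (Suc k)) \<noteq> 0" using assms unfolding cpos_def by blast
  ultimately show ?thesis by linarith
qed

lemma cpos_side_nonzero:
  assumes "cpos P n" shows "side P k \<noteq> 0"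
  using cpos_det2_side_Suc_pos[OF assms, of k] by auto

lemma cpos_side_opposite_parallel:
  assumes "cpos P n" shows "\<exists>c. side P (k + n) = c *\<^sub>R side P k"
  using det2_eq_0_imp_scaleR cpos_side_nonzero[OF assms] assms unfolding cpos_def by blast

text \<open>The turns at \<open>k\<close> and at \<open>k + n\<close> have the same orientation, so consecutive ratios of
  opposite sides have the same sign.\<close>

lemma cpos_opposite_ratio_same_sign:
  assumes "cpos P n"
    and "side P (k + n) = a *\<^sub>R side P k" and "side P (Suc k + n) = b *\<^sub>R side P (Suc k)"
  shows "a * b > 0"
proof -
  have "0 < det2 (side P (k + n)) (side P (Suc (k + n)))"
    by (rule cpos_det2_side_Suc_pos[OF assms(1)])
  also have "\<dots> = (a * b) * det2 (side P k) (side P (Suc k))"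
    using assms(2,3) by simp
  finally show ?thesis
    using cpos_det2_side_Suc_pos[OF assms(1), of k] by (simp add: zero_less_mult_iff)
qed

lemma cpos_side_opposite_antiparallel:
  assumes "cpos P n" shows "\<exists>c<0. side P (k + n) = c *\<^sub>R side P k"
proof -
  have step: "\<exists>c<0. side P (Suc k + n) = c *\<^sub>R side P (Suc k)"
    if "side P (k + n) = a *\<^sub>R side P k" "a < 0" for k a
  proof -
    obtain b where b: "side P (Suc k + n) = b *\<^sub>R side P (Suc k)"
      using cpos_side_opposite_parallel[OF assms] by blast
    have "a * b > 0" by (rule cpos_opposite_ratio_same_sign[OF assms that(1) b])
    then show ?thesis using b \<open>a < 0\<close> by (auto simp: zero_less_mult_iff)
  qed
  have one: "\<exists>c<0. side P (Suc 0 + n) = c *\<^sub>R side P (Suc 0)"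
  proof -
    obtain c where c: "side P (Suc n) = c *\<^sub>R side P 1"
      using cpos_side_opposite_parallel[OF assms, of 1] by auto
    have "0 < det2 (side P n) (side P (Suc n))" by (rule cpos_det2_side_Suc_pos[OF assms])
    also have "\<dots> = - c * det2 (side P 1) (side P n)" using c by (simp add: det2_commute[of "side P n"])
    finally have "c * det2 (side P 1) (side P n) < 0" by simp
    moreover have "det2 (side P 1) (side P n) > 0" using assms unfolding cpos_def by auto
    ultimately show ?thesis using c by (auto simp: mult_less_0_iff)
  qed
  have pos: "\<exists>c<0. side P (Suc m + n) = c *\<^sub>R side P (Suc m)" for m
  proof (induction m)
    case (Suc m)
    then obtain a where "side P (Suc m + n) = a *\<^sub>R side P (Suc m)" "a < 0" by blast
    then show ?case by (rule step)
  qed (rule one)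
  show ?thesis
  proof (cases k)
    case 0
    obtain a where a: "side P (0 + n) = a *\<^sub>R side P 0"
      using cpos_side_opposite_parallel[OF assms, of 0] by blast
    obtain b where b: "b < 0" "side P (Suc 0 + n) = b *\<^sub>R side P (Suc 0)" using pos by blast
    have "a * b > 0" by (rule cpos_opposite_ratio_same_sign[OF assms a b(2)])
    then show ?thesis using a b(1) 0 by (auto simp: zero_less_mult_iff)
  qed (use pos in blast)
qed

text \<open>The diagonal \<open>P i P (i+n)\<close> leaves the side \<open>P i P (i+1)\<close> strictly to the left: otherwise
  \<open>P (i+2)\<close> would lie strictly to the right of the antiparallel side starting at \<open>P (i+n)\<close>.\<close>

lemma cpos_det2_side_diagonal_pos:
  assumes "cpos P n" shows "det2 (side P i) (P (i + n) - P i) > 0"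
proof (rule ccontr)
  assume "\<not> ?thesis"
  moreover have "det2 (side P i) (P (i + n) - P i) \<ge> 0" using assms unfolding cpos_def by blast
  ultimately have diag: "det2 (side P i) (P (i + n) - P i) = 0" by linarith
  obtain c where c: "c < 0" "side P (i + n) = c *\<^sub>R side P i"
    using cpos_side_opposite_antiparallel[OF assms] by blast
  have "P (i + 2) - P (i + n) = side P i + side P (Suc i) - (P (i + n) - P i)"
    by (simp add: side_def)
  then have "det2 (side P (i + n)) (P (i + 2) - P (i + n)) = c * det2 (side P i) (side P (Suc i))"
    using diag c(2) by (simp add: det2_diff_right det2_add_right)
  also have "\<dots> < 0" using c(1) cpos_det2_side_Suc_pos[OF assms, of i] by (simp add: mult_neg_pos)
  finally show False using assms unfolding cpos_def by (meson not_le)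
qed

definition shoelace :: "pt list \<Rightarrow> real" where
  "shoelace vs = (\<Sum>k<length vs. det2 (vs ! k) (vs ! ((k + 1) mod length vs)))"

lemma poly_area_shoelace: "poly_area vs = \<bar>shoelace vs\<bar> / 2"
  by (simp add: poly_area_def shoelace_def)

lemma shoelace_map_upt:
  "shoelace (map f [0..<Suc m]) = (\<Sum>k<m. det2 (f k) (f (Suc k))) + det2 (f m) (f 0)"
proof -
  have "shoelace (map f [0..<Suc m]) = (\<Sum>k<Suc m. det2 (f k) (f ((k + 1) mod Suc m)))"
    unfolding shoelace_def by (intro sum.cong) (simp_all del: upt_Suc add: nth_map_upt)
  also have "\<dots> = (\<Sum>k<m. det2 (f k) (f ((k + 1) mod Suc m))) + det2 (f m) (f 0)"
    by simp
  also have "(\<Sum>k<m. det2 (f k) (f ((k + 1) mod Suc m))) = (\<Sum>k<m. det2 (f k) (f (Suc k)))"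
    by (intro sum.cong) auto
  finally show ?thesis .
qed

lemma shoelace_map_upt_fan:
  "shoelace (map f [0..<Suc m]) = (\<Sum>k<m. det2 (f k - f 0) (f (Suc k) - f 0))"
proof -
  have "(\<Sum>k<m. det2 (f k - a) (f (Suc k) - a)) =
      (\<Sum>k<m. det2 (f k) (f (Suc k))) + det2 a (f 0) - det2 a (f m)" for a
    by (induction m) (simp_all add: det2_def algebra_simps)
  then show ?thesis unfolding shoelace_map_upt by (simp add: det2_commute[of "f 0" "f m"])
qed

lemma shoelace_snoc:
  "shoelace (map f [0..<Suc m] @ [Q]) = shoelace (map f [0..<Suc m]) + det2 (f m - f 0) (Q - f 0)"
proof -
  let ?g = "f(Suc m := Q)"
  have "map f [0..<Suc m] @ [Q] = map ?g [0..<Suc (Suc m)]"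
    by (simp del: upt_Suc add: upt_Suc_append)
  moreover have "(\<Sum>k<m. det2 (?g k) (?g (Suc k))) = (\<Sum>k<m. det2 (f k) (f (Suc k)))"
    by (intro sum.cong) auto
  ultimately have "shoelace (map f [0..<Suc m] @ [Q]) =
      (\<Sum>k<m. det2 (f k) (f (Suc k))) + det2 (f m) Q + det2 Q (f 0)"
    by (simp only: shoelace_map_upt sum.lessThan_Suc) simp
  moreover have "det2 (f m) Q + det2 Q (f 0) = det2 (f m) (f 0) + det2 (f m - f 0) (Q - f 0)"
    by (simp add: det2_def algebra_simps)
  ultimately show ?thesis unfolding shoelace_map_upt by simp
qed

lemma det2_move_vertex_along_line:
  assumes "Q = (1 - u) *\<^sub>R a + u *\<^sub>R b"
  shows "det2 Q b + det2 p Q = det2 a b + det2 p a - det2 (a - p) (Q - p)"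
  unfolding assms by (simp add: det2_def algebra_simps)

lemma shoelace_move_first_vertex_along_side:
  assumes "Q \<in> closed_segment (f 0) (f 1)" and "0 < m"
  shows "shoelace (map (f(0 := Q)) [0..<Suc m]) =
    shoelace (map f [0..<Suc m]) - det2 (f 0 - f m) (Q - f m)"
proof -
  obtain u where u: "Q = (1 - u) *\<^sub>R f 0 + u *\<^sub>R f 1"
    using assms(1) unfolding closed_segment_def by blast
  obtain m' where m: "m = Suc m'" using assms(2) by (cases m) auto
  define S where "S = (\<Sum>k<m'. det2 (f (Suc k)) (f (Suc (Suc k))))"
  have "shoelace (map (f(0 := Q)) [0..<Suc m]) = det2 Q (f 1) + S + det2 (f m) Q"
    unfolding shoelace_map_upt m sum.lessThan_Suc_shift S_def by simp
  moreover have "shoelace (map f [0..<Suc m]) = det2 (f 0) (f 1) + S + det2 (f m) (f 0)"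
    unfolding shoelace_map_upt m sum.lessThan_Suc_shift S_def by simp
  moreover have "det2 Q (f 1) + det2 (f m) Q =
      det2 (f 0) (f 1) + det2 (f m) (f 0) - det2 (f 0 - f m) (Q - f m)"
    by (rule det2_move_vertex_along_line[OF u])
  ultimately show ?thesis by linarith
qed

lemma cpos_shoelace_nonneg:
  assumes "cpos P n"
  shows "shoelace (map (\<lambda>k. P (b + k)) [0..<Suc m]) \<ge> 0"
  unfolding shoelace_map_upt_fan
proof (rule sum_nonneg)
  fix k
  have "det2 (P (b + k) - P b) (P (b + Suc k) - P b) = det2 (side P (b + k)) (P b - P (b + k))"
    by (simp add: side_def det2_def algebra_simps)
  also have "\<dots> \<ge> 0" using assms unfolding cpos_def by blast
  finally show "det2 (P (b + k) - P (b + 0)) (P (b + Suc k) - P (b + 0)) \<ge> 0" by simp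
qed

lemma cpos_A_plus:
  assumes "cpos P n" shows "2 * A_plus P n i = shoelace (map (\<lambda>k. P (i + k)) [0..<Suc n])"
  using cpos_shoelace_nonneg[OF assms] by (simp add: A_plus_def poly_area_shoelace)

lemma cpos_A_minus:
  assumes "cpos P n" shows "2 * A_minus P n i = shoelace (map (\<lambda>k. P (i + n + k)) [0..<Suc n])"
  using cpos_shoelace_nonneg[OF assms] by (simp add: A_minus_def poly_area_shoelace)

lemma cpos_Npt_eq:
  assumes "cpos P n"
  shows "Npt P n i = Mpt P n i +
    ((A_plus P n i - A_minus P n i) / (2 * det2 (side P i) (P (i + n) - P i))) *\<^sub>R side P i"
    (is "_ = _ + ?s *\<^sub>R _")
  unfolding Npt_def
proof (rule the_equality)
  let ?D = "det2 (side P i) (P (i + n) - P i)"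
  have D: "?D > 0" by (rule cpos_det2_side_diagonal_pos[OF assms])
  show "Mpt P n i + ?s *\<^sub>R side P i \<in> midline P n i \<and>
    det2 (Mpt P n i + ?s *\<^sub>R side P i - Mpt P n i) (P (i + n) - P i) =
      (A_plus P n i - A_minus P n i) / 2"
    using D by (auto simp: midline_def)
  fix X assume X: "X \<in> midline P n i \<and>
    det2 (X - Mpt P n i) (P (i + n) - P i) = (A_plus P n i - A_minus P n i) / 2"
  then obtain t where t: "X = Mpt P n i + t *\<^sub>R side P i" unfolding midline_def by blast
  then have "t * ?D = (A_plus P n i - A_minus P n i) / 2" using X by simp
  then have "t = ?s" using D by (simp add: field_simps)
  then show "X = Mpt P n i + ?s *\<^sub>R side P i" using t by simp
qed

text \<open>Both claims rest on the decomposition \<open>Q - P i = (P (i+n) - P i) + 2 s side P i\<close>, where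
  \<open>N = M + s side P i\<close>: the ray through \<open>N\<close> reaches the line of the opposite side at
  parameter 2.\<close>

lemma cpos_chord_through_Npt:
  assumes "cpos P n"
    and "Q \<in> {P i + t *\<^sub>R (Npt P n i - P i) | t. True}"
    and "Q \<in> closed_segment (P (i + n)) (P (i + n + 1))"
  shows "Npt P n i = midpoint (P i) Q"
    and "det2 (P (i + n) - P i) (Q - P i) = A_minus P n i - A_plus P n i"
proof -
  define D where "D = det2 (side P i) (P (i + n) - P i)"
  define s where "s = (A_plus P n i - A_minus P n i) / (2 * D)"
  have D: "D > 0" unfolding D_def by (rule cpos_det2_side_diagonal_pos[OF assms(1)])
  have N: "Npt P n i - P i = (1/2) *\<^sub>R (P (i + n) - P i) + s *\<^sub>R side P i"
    unfolding cpos_Npt_eq[OF assms(1)] s_def D_def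
    by (simp add: Mpt_def midpoint_def prod_eq_iff algebra_simps)
  obtain t where t: "Q = P i + t *\<^sub>R (Npt P n i - P i)" using assms(2) by blast
  obtain u where u: "Q = (1 - u) *\<^sub>R P (i + n) + u *\<^sub>R P (i + n + 1)"
    using assms(3) unfolding closed_segment_def by blast
  obtain c where c: "side P (i + n) = c *\<^sub>R side P i"
    using cpos_side_opposite_parallel[OF assms(1)] by blast
  have "Q - P (i + n) = u *\<^sub>R side P (i + n)"
    using u by (simp add: side_def algebra_simps)
  then have "Q - P i = (P (i + n) - P i) + (u * c) *\<^sub>R side P i"
    using c by (simp add: algebra_simps)
  then have "det2 (side P i) (Q - P i) = D"
    by (simp only: det2_add_right) (simp add: D_def)
  moreover have "det2 (side P i) (Q - P i) = t * (D / 2)"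
    using t N by (simp add: D_def det2_add_right)
  ultimately have "t = 2" using D by (simp add: field_simps)
  then have Q: "Q - P i = (P (i + n) - P i) + (2 * s) *\<^sub>R side P i"
    using t N by (simp add: algebra_simps)
  show "Npt P n i = midpoint (P i) Q"
    using t \<open>t = 2\<close> by (simp add: midpoint_def prod_eq_iff algebra_simps)
  have "det2 (P (i + n) - P i) (Q - P i) = - 2 * s * D"
    unfolding Q D_def by (simp add: det2_add_right det2_commute[of "P (i + n) - P i"])
  then show "det2 (P (i + n) - P i) (Q - P i) = A_minus P n i - A_plus P n i"
    using D by (simp add: s_def)
qed

theorem mainTheorem10:
  fixes P :: "nat \<Rightarrow> real \<times> real" and n i :: nat and Q :: "real \<times> real"
  assumes "cpos P n"
    and "Q \<in> {P i + t *\<^sub>R (Npt P n i - P i) | t. True}"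
    and "Q \<in> closed_segment (P (n + i)) (P (n + i + 1))"
  shows "Npt P n i = midpoint (P i) Q \<and>
         poly_area (map (\<lambda>k. P (i + k)) [0..<n + 1] @ [Q]) =
         poly_area (Q # map (\<lambda>k. P (n + i + 1 + k)) [0..<n])"
proof -
  define f where "f = (\<lambda>k. P (i + n + k))"
  have seg: "Q \<in> closed_segment (P (i + n)) (P (i + n + 1))"
    using assms(3) by (simp add: add.commute)
  note chord = cpos_chord_through_Npt[OF assms(1,2) seg]
  have "0 < n" and "f n = P i"
    using assms(1) unfolding cpos_def f_def by (auto simp: add.assoc simp flip: mult_2)
  have "shoelace (map (\<lambda>k. P (i + k)) [0..<Suc n] @ [Q]) =
      2 * A_plus P n i + det2 (P (i + n) - P i) (Q - P i)"
    using shoelace_snoc[of "\<lambda>k. P (i + k)" n Q] cpos_A_plus[OF assms(1), of i]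
    by (simp del: upt_Suc)
  then have "poly_area (map (\<lambda>k. P (i + k)) [0..<n + 1] @ [Q]) =
      \<bar>A_plus P n i + A_minus P n i\<bar> / 2"
    unfolding poly_area_shoelace Suc_eq_plus1[symmetric] chord(2) by simp
  moreover have "Q # map (\<lambda>k. P (n + i + 1 + k)) [0..<n] = map (f(0 := Q)) [0..<Suc n]"
    unfolding map_upt_Suc by (simp add: f_def algebra_simps)
  moreover have "shoelace (map (f(0 := Q)) [0..<Suc n]) =
      2 * A_minus P n i - det2 (P (i + n) - P i) (Q - P i)"
    using shoelace_move_first_vertex_along_side[of Q f n] seg \<open>0 < n\<close> \<open>f n = P i\<close>
      cpos_A_minus[OF assms(1), of i]
    by (simp del: upt_Suc add: f_def)
  ultimately show ?thesis
    unfolding poly_area_shoelace chord(2) using chord(1) by simp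
qed

end
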